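(* Let $\alpha>0$, $\beta,\eta,\kappa\in\mathbb{R}$, $\rho>0$, $p\geq 1$, and $0\le a<x$. Let $f,g$ be two positive functions on $[0,\infty)$ with $f,g\in X^{p}_{c}(a,x)$ (for some $c\in\mathbb{R}$), such that ${}^{\rho}\mathcal{I}^{\alpha,\beta}_{a+,\eta,\kappa}f^{p}(x)<\infty$ and ${}^{\rho}\mathcal{I}^{\alpha,\beta}_{a+,\eta,\kappa}g^{p}(x)<\infty$. Suppose there are real numbers $a_1,A,b_1,B$ with $0\leq a_1\leq f(t)\leq A$ and $0\leq b_1\leq g(t)\leq B$ for all $t\in[a,x]$. Then $$\left({}^{\rho}\mathcal{I}^{\alpha,\beta}_{a+,\eta,\kappa}f^{p}(x)\right)^{1/p}+\left({}^{\rho}\mathcal{I}^{\alpha,\beta}_{a+,\eta,\kappa}g^{p}(x)\right)^{1/p}\leq c_{5}\left({}^{\rho}\mathcal{I}^{\alpha,\beta}_{a+,\eta,\kappa}(f+g)^{p}(x)\right)^{1/p},$$ where $c_{5}=\frac{A(a_1+B)+B(A+b_1)}{(A+b_1)(a_1+B)}$.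
   Context: For $c\in\mathbb{R}$ and $1\le p<\infty$, $X^{p}_{c}(a,b)$ denotes the space of Lebesgue measurable functions $f$ on $(a,b)$ with $\left(\int_a^b |t^{c}f(t)|^{p}\,\frac{dt}{t}\right)^{1/p}<\infty$. For $\alpha>0$, $\beta,\eta,\kappa\in\mathbb{R}$, $\rho>0$, $0\le a<x$, and a function $\varphi$, the generalized (Katugampola) fractional integral is $${}^{\rho}\mathcal{I}^{\alpha,\beta}_{a+,\eta,\kappa}\varphi(x)=\frac{\rho^{1-\beta}x^{\kappa}}{\Gamma(\alpha)}\int_{a}^{x}\frac{\tau^{\rho(\eta+1)-1}}{(x^{\rho}-\tau^{\rho})^{1-\alpha}}\varphi(\tau)\,d\tau,$$ whenever the integral exists. Notation such as ${}^{\rho}\mathcal{I}^{\alpha,\beta}_{a+,\eta,\kappa}(f+g)^{p}(x)$ means the operator applied to $\tau\mapsto(f(\tau)+g(\tau))^p$, evaluated at $x$. *)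

theory Defs
  imports "HOL-Analysis.Analysis"
begin

definition Xpc :: "real \<Rightarrow> real \<Rightarrow> real \<Rightarrow> real \<Rightarrow> (real \<Rightarrow> real) \<Rightarrow> bool" where
  "Xpc c p a b f \<longleftrightarrow>
     set_borel_measurable lborel {a<..<b} f \<and>
     (\<integral>\<^sup>+ t \<in> {a<..<b}. ennreal (\<bar>t powr c * f t\<bar> powr p / t) \<partial>lborel) < \<infinity>"

definition katu_kernel :: "real \<Rightarrow> real \<Rightarrow> real \<Rightarrow> real \<Rightarrow> real \<Rightarrow> real" where
  "katu_kernel \<rho> \<alpha> \<eta> x \<tau> =
     \<tau> powr (\<rho> * (\<eta> + 1) - 1) / (x powr \<rho> - \<tau> powr \<rho>) powr (1 - \<alpha>)"

definition katu_exists :: "real \<Rightarrow> real \<Rightarrow> real \<Rightarrow> real \<Rightarrow> real \<Rightarrow> (real \<Rightarrow> real) \<Rightarrow> bool" where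
  "katu_exists \<rho> \<alpha> \<eta> a x \<phi> \<longleftrightarrow>
     set_integrable lborel {a<..<x} (\<lambda>\<tau>. katu_kernel \<rho> \<alpha> \<eta> x \<tau> * \<phi> \<tau>)"

definition katu_int ::
  "real \<Rightarrow> real \<Rightarrow> real \<Rightarrow> real \<Rightarrow> real \<Rightarrow> real \<Rightarrow> real \<Rightarrow> (real \<Rightarrow> real) \<Rightarrow> real" where
  "katu_int \<rho> \<alpha> \<beta> \<eta> \<kappa> a x \<phi> =
     \<rho> powr (1 - \<beta>) * x powr \<kappa> / Gamma \<alpha> *
     (LBINT \<tau>:{a<..<x}. katu_kernel \<rho> \<alpha> \<eta> x \<tau> * \<phi> \<tau>)"

end

theory Submission
  imports Defs
begin

text \<open>Pointwise, \<open>f b\<^sub>1 \<le> A g\<close> gives \<open>f \<le> A/(A + b\<^sub>1) (f + g)\<close>, and symmetrically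
  \<open>g \<le> B/(a\<^sub>1 + B) (f + g)\<close>. The generalized fractional integral has a nonnegative kernel,
  so it is monotone and linear; hence \<open>(I f\<^sup>p)\<^bsup>1/p\<^esup> \<le> A/(A + b\<^sub>1) (I (f + g)\<^sup>p)\<^bsup>1/p\<^esup>\<close> and
  likewise for \<open>g\<close>. Adding the two bounds gives the constant \<open>c\<^sub>5 = A/(A + b\<^sub>1) + B/(a\<^sub>1 + B)\<close>.\<close>

lemma le_frac_mult_add:
  fixes u w A b :: real
  assumes "0 < u" "u \<le> A" "0 \<le> b" "b \<le> w"
  shows "u \<le> A / (A + b) * (u + w)"
proof -
  have "u * b \<le> A * w"
    using assms by (intro mult_mono) auto
  then have "u * (A + b) \<le> A * (u + w)"
    by (simp add: algebra_simps)
  then show ?thesis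
    using assms by (simp add: field_simps)
qed

lemma powr_add_le_two_powr:
  fixes u w p :: real
  assumes "0 \<le> u" "0 \<le> w" "0 \<le> p"
  shows "(u + w) powr p \<le> 2 powr p * (u powr p + w powr p)"
proof -
  have "(u + w) powr p \<le> (2 * max u w) powr p"
    using assms by (intro powr_mono2) auto
  also have "\<dots> = 2 powr p * max u w powr p"
    using assms by (simp add: powr_mult)
  also have "max u w powr p \<le> u powr p + w powr p"
    by (cases "u \<le> w") (auto simp: max_def)
  finally show ?thesis
    by simp
qed

lemma katu_kernel_nonneg: "0 \<le> katu_kernel \<rho> \<alpha> \<eta> x \<tau>"
  unfolding katu_kernel_def by simp

lemma katu_kernel_measurable [measurable]:
  "katu_kernel \<rho> \<alpha> \<eta> x \<in> borel_measurable lborel"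
  unfolding katu_kernel_def by measurable

lemma katu_int_nonneg:
  assumes "\<alpha> > 0" "\<And>\<tau>. \<tau> \<in> {a<..<x} \<Longrightarrow> 0 \<le> \<phi> \<tau>"
  shows "0 \<le> katu_int \<rho> \<alpha> \<beta> \<eta> \<kappa> a x \<phi>"
proof -
  have "0 \<le> (LBINT \<tau>:{a<..<x}. katu_kernel \<rho> \<alpha> \<eta> x \<tau> * \<phi> \<tau>)"
    unfolding set_lebesgue_integral_def
    using assms(2) katu_kernel_nonneg
    by (intro Bochner_Integration.integral_nonneg) (auto simp: indicator_def)
  then show ?thesis
    using assms(1) unfolding katu_int_def by simp
qed

lemma katu_int_cmult:
  "katu_int \<rho> \<alpha> \<beta> \<eta> \<kappa> a x (\<lambda>\<tau>. c * \<phi> \<tau>) = c * katu_int \<rho> \<alpha> \<beta> \<eta> \<kappa> a x \<phi>"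
  unfolding katu_int_def by (simp add: mult.left_commute)

lemma katu_exists_cmult:
  "katu_exists \<rho> \<alpha> \<eta> a x \<phi> \<Longrightarrow> katu_exists \<rho> \<alpha> \<eta> a x (\<lambda>\<tau>. c * \<phi> \<tau>)"
  unfolding katu_exists_def by (simp add: mult.left_commute)

lemma katu_int_mono:
  assumes "\<alpha> > 0" "katu_exists \<rho> \<alpha> \<eta> a x \<phi>" "katu_exists \<rho> \<alpha> \<eta> a x \<psi>"
    and "\<And>\<tau>. \<tau> \<in> {a<..<x} \<Longrightarrow> \<phi> \<tau> \<le> \<psi> \<tau>"
  shows "katu_int \<rho> \<alpha> \<beta> \<eta> \<kappa> a x \<phi> \<le> katu_int \<rho> \<alpha> \<beta> \<eta> \<kappa> a x \<psi>"
proof -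
  have "(LBINT \<tau>:{a<..<x}. katu_kernel \<rho> \<alpha> \<eta> x \<tau> * \<phi> \<tau>)
      \<le> (LBINT \<tau>:{a<..<x}. katu_kernel \<rho> \<alpha> \<eta> x \<tau> * \<psi> \<tau>)"
    using assms(2-4) katu_kernel_nonneg unfolding katu_exists_def
    by (intro set_integral_mono mult_left_mono) auto
  then show ?thesis
    using assms(1) unfolding katu_int_def by (intro mult_left_mono) auto
qed

lemma katu_int_powr_root_le:
  assumes "\<alpha> > 0" "p > 0" "c > 0"
    and "katu_exists \<rho> \<alpha> \<eta> a x (\<lambda>\<tau>. u \<tau> powr p)"
    and "katu_exists \<rho> \<alpha> \<eta> a x (\<lambda>\<tau>. w \<tau> powr p)"
    and "\<And>\<tau>. \<tau> \<in> {a<..<x} \<Longrightarrow> 0 \<le> u \<tau> \<and> u \<tau> \<le> c * w \<tau>"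
  shows "katu_int \<rho> \<alpha> \<beta> \<eta> \<kappa> a x (\<lambda>\<tau>. u \<tau> powr p) powr (1/p)
    \<le> c * katu_int \<rho> \<alpha> \<beta> \<eta> \<kappa> a x (\<lambda>\<tau>. w \<tau> powr p) powr (1/p)"
proof -
  let ?I = "katu_int \<rho> \<alpha> \<beta> \<eta> \<kappa> a x"
  have pointwise: "u \<tau> powr p \<le> c powr p * w \<tau> powr p" if "\<tau> \<in> {a<..<x}" for \<tau>
  proof -
    have "0 \<le> w \<tau>"
      using assms(3) assms(6)[OF that] by (metis order.trans zero_le_mult_iff not_le)
    moreover have "u \<tau> powr p \<le> (c * w \<tau>) powr p"
      using assms(2) assms(6)[OF that] by (intro powr_mono2) auto
    ultimately show ?thesis
      using assms(3) by (simp add: powr_mult)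
  qed
  have "?I (\<lambda>\<tau>. u \<tau> powr p) \<le> ?I (\<lambda>\<tau>. c powr p * w \<tau> powr p)"
    using assms(1,4,5) pointwise by (intro katu_int_mono katu_exists_cmult)
  also have "\<dots> = c powr p * ?I (\<lambda>\<tau>. w \<tau> powr p)"
    by (rule katu_int_cmult)
  finally have "?I (\<lambda>\<tau>. u \<tau> powr p) powr (1/p) \<le> (c powr p * ?I (\<lambda>\<tau>. w \<tau> powr p)) powr (1/p)"
    using assms(1,2) by (intro powr_mono2 katu_int_nonneg) auto
  also have "\<dots> = c * ?I (\<lambda>\<tau>. w \<tau> powr p) powr (1/p)"
    using assms(1-3) katu_int_nonneg[of \<alpha> a x "\<lambda>\<tau>. w \<tau> powr p"]
    by (simp add: powr_mult powr_powr)
  finally show ?thesis .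
qed

lemma katu_exists_powr_add:
  assumes "p > 0"
    and u_meas: "set_borel_measurable lborel {a<..<x} u"
    and w_meas: "set_borel_measurable lborel {a<..<x} w"
    and "\<And>\<tau>. \<tau> \<in> {a<..<x} \<Longrightarrow> 0 \<le> u \<tau> \<and> 0 \<le> w \<tau>"
    and "katu_exists \<rho> \<alpha> \<eta> a x (\<lambda>\<tau>. u \<tau> powr p)"
    and "katu_exists \<rho> \<alpha> \<eta> a x (\<lambda>\<tau>. w \<tau> powr p)"
  shows "katu_exists \<rho> \<alpha> \<eta> a x (\<lambda>\<tau>. (u \<tau> + w \<tau>) powr p)"
  unfolding katu_exists_def
proof (rule set_integrable_bound)
  let ?S = "{a<..<x}" and ?k = "katu_kernel \<rho> \<alpha> \<eta> x"
  show "set_integrable lborel ?S (\<lambda>\<tau>. 2 powr p * (?k \<tau> * u \<tau> powr p + ?k \<tau> * w \<tau> powr p))"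
    using assms(5,6) unfolding katu_exists_def by (intro set_integrable_mult_right set_integral_add)
  have [measurable]: "(\<lambda>\<tau>. indicator ?S \<tau> *\<^sub>R u \<tau>) \<in> borel_measurable lborel"
      "(\<lambda>\<tau>. indicator ?S \<tau> *\<^sub>R w \<tau>) \<in> borel_measurable lborel"
    using u_meas w_meas unfolding set_borel_measurable_def by auto
  have restrict_eq: "(\<lambda>\<tau>. indicator ?S \<tau> *\<^sub>R (?k \<tau> * (u \<tau> + w \<tau>) powr p))
      = (\<lambda>\<tau>. ?k \<tau> * (indicator ?S \<tau> *\<^sub>R u \<tau> + indicator ?S \<tau> *\<^sub>R w \<tau>) powr p)"
    by (auto simp: indicator_def)
  show "set_borel_measurable lborel ?S (\<lambda>\<tau>. ?k \<tau> * (u \<tau> + w \<tau>) powr p)"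
    unfolding set_borel_measurable_def restrict_eq by measurable
  show "AE \<tau> in lborel. \<tau> \<in> ?S \<longrightarrow> norm (?k \<tau> * (u \<tau> + w \<tau>) powr p)
      \<le> norm (2 powr p * (?k \<tau> * u \<tau> powr p + ?k \<tau> * w \<tau> powr p))"
  proof (intro AE_I2 impI)
    fix \<tau> assume "\<tau> \<in> ?S"
    then have "?k \<tau> * (u \<tau> + w \<tau>) powr p \<le> ?k \<tau> * (2 powr p * (u \<tau> powr p + w \<tau> powr p))"
      using assms(1,4) katu_kernel_nonneg by (intro mult_left_mono powr_add_le_two_powr) auto
    then show "norm (?k \<tau> * (u \<tau> + w \<tau>) powr p)
        \<le> norm (2 powr p * (?k \<tau> * u \<tau> powr p + ?k \<tau> * w \<tau> powr p))"
      using katu_kernel_nonneg by (simp add: algebra_simps)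
  qed
qed

theorem theorem13:
  fixes \<alpha> \<beta> \<eta> \<kappa> \<rho> p a x c a1 A b1 B :: real
    and f g :: "real \<Rightarrow> real"
  assumes "\<alpha> > 0" and "\<rho> > 0" and "p \<ge> 1" and "0 \<le> a" and "a < x"
    and "\<forall>t\<ge>0. f t > 0" and "\<forall>t\<ge>0. g t > 0"
    and "Xpc c p a x f" and "Xpc c p a x g"
    and "katu_exists \<rho> \<alpha> \<eta> a x (\<lambda>\<tau>. f \<tau> powr p)"
    and "katu_exists \<rho> \<alpha> \<eta> a x (\<lambda>\<tau>. g \<tau> powr p)"
    and "0 \<le> a1" and "0 \<le> b1"
    and "\<forall>t\<in>{a..x}. a1 \<le> f t \<and> f t \<le> A"
    and "\<forall>t\<in>{a..x}. b1 \<le> g t \<and> g t \<le> B"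
  shows "(katu_int \<rho> \<alpha> \<beta> \<eta> \<kappa> a x (\<lambda>\<tau>. f \<tau> powr p)) powr (1/p)
         + (katu_int \<rho> \<alpha> \<beta> \<eta> \<kappa> a x (\<lambda>\<tau>. g \<tau> powr p)) powr (1/p)
       \<le> ((A * (a1 + B) + B * (A + b1)) / ((A + b1) * (a1 + B)))
         * (katu_int \<rho> \<alpha> \<beta> \<eta> \<kappa> a x (\<lambda>\<tau>. (f \<tau> + g \<tau>) powr p)) powr (1/p)"
proof -
  have fg_pos: "f \<tau> > 0 \<and> g \<tau> > 0" if "\<tau> \<in> {a<..<x}" for \<tau>
    using that assms(4,6,7) by auto
  have "A > 0" "B > 0"
    using assms(4-7,14,15) by force+
  have sum_exists: "katu_exists \<rho> \<alpha> \<eta> a x (\<lambda>\<tau>. (f \<tau> + g \<tau>) powr p)"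
    using assms(3,8-11) fg_pos less_imp_le
    by (intro katu_exists_powr_add) (auto simp: Xpc_def)
  have f_le: "0 \<le> f \<tau> \<and> f \<tau> \<le> A / (A + b1) * (f \<tau> + g \<tau>)" if "\<tau> \<in> {a<..<x}" for \<tau>
    using that fg_pos[OF that] assms(13-15) le_frac_mult_add[of "f \<tau>" A b1 "g \<tau>"] by auto
  have g_le: "0 \<le> g \<tau> \<and> g \<tau> \<le> B / (a1 + B) * (f \<tau> + g \<tau>)" if "\<tau> \<in> {a<..<x}" for \<tau>
    using that fg_pos[OF that] assms(12,14,15) le_frac_mult_add[of "g \<tau>" B a1 "f \<tau>"]
    by (auto simp: add.commute)
  have "katu_int \<rho> \<alpha> \<beta> \<eta> \<kappa> a x (\<lambda>\<tau>. f \<tau> powr p) powr (1/p)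
      \<le> A / (A + b1) * katu_int \<rho> \<alpha> \<beta> \<eta> \<kappa> a x (\<lambda>\<tau>. (f \<tau> + g \<tau>) powr p) powr (1/p)"
    using assms(1,3,10,13) \<open>A > 0\<close> sum_exists f_le by (intro katu_int_powr_root_le) auto
  moreover have "katu_int \<rho> \<alpha> \<beta> \<eta> \<kappa> a x (\<lambda>\<tau>. g \<tau> powr p) powr (1/p)
      \<le> B / (a1 + B) * katu_int \<rho> \<alpha> \<beta> \<eta> \<kappa> a x (\<lambda>\<tau>. (f \<tau> + g \<tau>) powr p) powr (1/p)"
    using assms(1,3,11,12) \<open>B > 0\<close> sum_exists g_le by (intro katu_int_powr_root_le) auto
  moreover have "(A * (a1 + B) + B * (A + b1)) / ((A + b1) * (a1 + B)) = A / (A + b1) + B / (a1 + B)"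
    using \<open>A > 0\<close> \<open>B > 0\<close> assms(12,13) by (simp add: field_simps)
  ultimately show ?thesis
    by (simp add: distrib_right)
qed

end
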